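(* Let $\mathbf P=(P,\leq,{}',0,1)$ be an orthogonal lub-complete poset. Then the following conditions are equivalent: (i) $\mathbf P$ is an orthocomplemented poset. (ii) For all $x,y\in P$, $x\leq y$ implies $x\rightarrow_S y=1$. (iii) For all $x,y\in P$, $x\leq y$ implies $x\rightarrow_D y=1$.
   Context: $(P,\leq,{}',0,1)$ is a bounded poset with an antitone involution ${}'$; orthogonal means $x\leq y'$ implies $x\vee y$ exists; lub-complete means for every lower bound $x$ of a finite subset $M$ there is a maximal lower bound of $M$ above $x$; orthocomplemented means $x\vee x'=1$ for all $x$. $L(x,y)$ is the set of common lower bounds and $\mathrm{Max}\,A$ the set of maximal elements of $A$; joins with sets are elementwise. Sasaki implication: $x\rightarrow_S y:=x'\vee \mathrm{Max}\,L(x,y)$; Dishkant implication: $x\rightarrow_D y:=y'\rightarrow_S x'=y\vee \mathrm{Max}\,L(x',y')$. "$=1$" means equal to $\{1\}$. *)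

theory Defs
  imports Main
begin

text \<open>A poset is modelled by a type of class order. The antitone involution is c,
  the bounds are z (bottom) and u (top).\<close>

definition bounded_poset_ai :: "('a::order \<Rightarrow> 'a) \<Rightarrow> 'a \<Rightarrow> 'a \<Rightarrow> bool" where
  "bounded_poset_ai c z u \<longleftrightarrow>
     (\<forall>x. z \<le> x \<and> x \<le> u) \<and>
     (\<forall>x y. x \<le> y \<longrightarrow> c y \<le> c x) \<and>
     (\<forall>x. c (c x) = x)"

definition is_join :: "'a::order \<Rightarrow> 'a \<Rightarrow> 'a \<Rightarrow> bool" where
  "is_join x y s \<longleftrightarrow> x \<le> s \<and> y \<le> s \<and> (\<forall>t. x \<le> t \<and> y \<le> t \<longrightarrow> s \<le> t)"

definition orthogonal :: "('a::order \<Rightarrow> 'a) \<Rightarrow> bool" where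
  "orthogonal c \<longleftrightarrow> (\<forall>x y. x \<le> c y \<longrightarrow> (\<exists>s. is_join x y s))"

definition lower_bounds :: "'a::order set \<Rightarrow> 'a set" where
  "lower_bounds M = {x. \<forall>m\<in>M. x \<le> m}"

definition Maxs :: "'a::order set \<Rightarrow> 'a set" where
  "Maxs A = {a \<in> A. \<forall>b\<in>A. a \<le> b \<longrightarrow> b = a}"

definition lub_complete :: "'a::order itself \<Rightarrow> bool" where
  "lub_complete _ \<longleftrightarrow>
     (\<forall>M::'a set. finite M \<longrightarrow>
        (\<forall>x \<in> lower_bounds M. \<exists>w \<in> Maxs (lower_bounds M). x \<le> w))"

definition orthocomplemented :: "('a::order \<Rightarrow> 'a) \<Rightarrow> 'a \<Rightarrow> bool" where
  "orthocomplemented c u \<longleftrightarrow> (\<forall>x. is_join x (c x) u)"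

definition L :: "'a::order \<Rightarrow> 'a \<Rightarrow> 'a set" where
  "L x y = {w. w \<le> x \<and> w \<le> y}"

definition join_set :: "'a::order \<Rightarrow> 'a set \<Rightarrow> 'a set" where
  "join_set x A = {s. \<exists>a\<in>A. is_join x a s}"

definition sasaki :: "('a::order \<Rightarrow> 'a) \<Rightarrow> 'a \<Rightarrow> 'a \<Rightarrow> 'a set" where
  "sasaki c x y = join_set (c x) (Maxs (L x y))"

definition dishkant :: "('a::order \<Rightarrow> 'a) \<Rightarrow> 'a \<Rightarrow> 'a \<Rightarrow> 'a set" where
  "dishkant c x y = sasaki c (c y) (c x)"

end

theory Submission
  imports Defs
begin

text \<open>For \<open>x \<le> y\<close> we have \<open>Max L(x,y) = {x}\<close>, so \<open>x \<rightarrow>\<^sub>S y\<close> is the set of joins of \<open>x'\<close>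
  and \<open>x\<close>; orthogonality guarantees that this join exists, hence \<open>x \<rightarrow>\<^sub>S y = 1\<close> says exactly
  \<open>x \<or> x' = 1\<close>. Taking \<open>y = x\<close> gives (i) \<open>\<Leftrightarrow>\<close> (ii). Since \<open>'\<close> is an antitone involution,
  \<open>x \<rightarrow>\<^sub>D y = y' \<rightarrow>\<^sub>S x'\<close> with \<open>y' \<le> x'\<close>, which is \<open>1\<close> iff \<open>y \<or> y' = 1\<close>; this gives
  (i) \<open>\<Leftrightarrow>\<close> (iii).\<close>

lemma Maxs_L_of_le: "(x::'a::order) \<le> y \<Longrightarrow> Maxs (L x y) = {x}"
  unfolding Maxs_def L_def by (auto intro: order.antisym)

lemma is_join_unique: "is_join a b s \<Longrightarrow> is_join a b t \<Longrightarrow> s = (t::'a::order)"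
  unfolding is_join_def by (meson order.antisym)

lemma is_join_commute: "is_join a b s \<longleftrightarrow> is_join b (a::'a::order) s"
  unfolding is_join_def by blast

lemma joins_eq_singleton_iff:
  "\<exists>s. is_join a b s \<Longrightarrow> {s. is_join a b s} = {u} \<longleftrightarrow> is_join a b (u::'a::order)"
  using is_join_unique by blast

lemma join_set_singleton: "join_set a {b} = {s. is_join a b s}"
  unfolding join_set_def by simp

lemma sasaki_of_le: "(x::'a::order) \<le> y \<Longrightarrow> sasaki c x y = {s. is_join x (c x) s}"
  unfolding sasaki_def by (simp add: Maxs_L_of_le join_set_singleton is_join_commute)

lemma orthogonal_join_compl_exists:
  assumes "orthogonal c" and "c (c x) = x"
  shows "\<exists>s. is_join x (c x) s"
  using assms unfolding orthogonal_def by (metis order.refl)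

lemma sasaki_of_le_eq_top_iff:
  assumes "orthogonal c" and "c (c x) = x" and "x \<le> y"
  shows "sasaki c x y = {u} \<longleftrightarrow> is_join x (c x) u"
  using sasaki_of_le[OF \<open>x \<le> y\<close>] joins_eq_singleton_iff
    orthogonal_join_compl_exists[OF assms(1,2)] by simp

lemma dishkant_of_le_eq_top_iff:
  assumes "orthogonal c" and "\<And>x. c (c x) = x" and "c y \<le> c x"
  shows "dishkant c x y = {u} \<longleftrightarrow> is_join y (c y) u"
proof -
  have "dishkant c x y = {u} \<longleftrightarrow> is_join (c y) y u"
    unfolding dishkant_def using sasaki_of_le_eq_top_iff[OF assms] assms(2) by simp
  then show ?thesis
    by (simp add: is_join_commute)
qed

lemma orthocomplemented_iff_sasaki_of_le_eq_top:
  assumes "orthogonal c" and "\<And>x. c (c x) = x"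
  shows "orthocomplemented c u \<longleftrightarrow> (\<forall>x y. x \<le> y \<longrightarrow> sasaki c x y = {u})"
  unfolding orthocomplemented_def
  using sasaki_of_le_eq_top_iff[OF assms(1) assms(2)] by (meson order.refl)

lemma orthocomplemented_iff_dishkant_of_le_eq_top:
  assumes "orthogonal c" and "\<And>x. c (c x) = x" and "\<And>x y. x \<le> y \<Longrightarrow> c y \<le> c x"
  shows "orthocomplemented c u \<longleftrightarrow> (\<forall>x y. x \<le> y \<longrightarrow> dishkant c x y = {u})"
  unfolding orthocomplemented_def
  using dishkant_of_le_eq_top_iff[OF assms(1,2) assms(3)] by (meson order.refl)

theorem theorem7:
  fixes c :: "'a::order \<Rightarrow> 'a" and z u :: 'a
  assumes "bounded_poset_ai c z u"
    and "orthogonal c"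
    and "lub_complete TYPE('a)"
  shows "(orthocomplemented c u \<longleftrightarrow> (\<forall>x y. x \<le> y \<longrightarrow> sasaki c x y = {u}))
       \<and> (orthocomplemented c u \<longleftrightarrow> (\<forall>x y. x \<le> y \<longrightarrow> dishkant c x y = {u}))"
proof -
  have involution: "\<And>x. c (c x) = x" and antitone: "\<And>x y. x \<le> y \<Longrightarrow> c y \<le> c x"
    using assms(1) unfolding bounded_poset_ai_def by auto
  show ?thesis
    using orthocomplemented_iff_sasaki_of_le_eq_top[OF assms(2) involution]
      orthocomplemented_iff_dishkant_of_le_eq_top[OF assms(2) involution antitone]
    by (rule conjI)
qed

end
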